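(* Let $G=(V,E)$ be a graph and $v\in V$. Then $v\in\mathrm{corona}(G)\setminus\mathrm{core}(G)$ if and only if either (1) $v\in V^-$ and $v$ is not isolated, or (2) $v\in V^0$, there exists a set $S\subseteq V\setminus\{v\}$ with $|S|=\gamma(G)$ that dominates $G-v$ and satisfies $S\cap N[v]\neq\emptyset$, and $\gamma(G_v+u)=\gamma(G)$.
   Context: All graphs are finite, simple and undirected. $N[v]$ is the closed neighborhood of $v$. $\gamma(G)$ is the domination number; a minimum dominating set (mds) is a dominating set of size $\gamma(G)$. $\mathrm{core}(G)$ is the set of vertices in every mds, $\mathrm{corona}(G)$ the set of vertices in at least one mds. $G-v$ is $G$ with $v$ deleted; $V^0=\{v:\gamma(G-v)=\gamma(G)\}$, $V^-=\{v:\gamma(G-v)<\gamma(G)\}$. $G_v+u$ is the graph obtained from $G$ by adding a new vertex $u$ and the single edge $uv$. A vertex is isolated if it has no neighbors. *)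

theory Defs
  imports Main
begin

definition graph :: "'a set \<Rightarrow> ('a \<Rightarrow> 'a \<Rightarrow> bool) \<Rightarrow> bool" where
  "graph V E \<longleftrightarrow> finite V \<and> (\<forall>x y. E x y \<longrightarrow> x \<in> V \<and> y \<in> V)
     \<and> (\<forall>x y. E x y \<longrightarrow> E y x) \<and> (\<forall>x. \<not> E x x)"

definition closed_nbhd :: "'a set \<Rightarrow> ('a \<Rightarrow> 'a \<Rightarrow> bool) \<Rightarrow> 'a \<Rightarrow> 'a set" where
  "closed_nbhd V E v = insert v {u \<in> V. E v u}"

definition dominates :: "'a set \<Rightarrow> ('a \<Rightarrow> 'a \<Rightarrow> bool) \<Rightarrow> 'a set \<Rightarrow> bool" where
  "dominates V E S \<longleftrightarrow> S \<subseteq> V \<and> (\<forall>x\<in>V. \<exists>s\<in>S. s = x \<or> E s x)"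

definition domination_number :: "'a set \<Rightarrow> ('a \<Rightarrow> 'a \<Rightarrow> bool) \<Rightarrow> nat" where
  "domination_number V E = Min {card S | S. dominates V E S}"

definition is_mds :: "'a set \<Rightarrow> ('a \<Rightarrow> 'a \<Rightarrow> bool) \<Rightarrow> 'a set \<Rightarrow> bool" where
  "is_mds V E S \<longleftrightarrow> dominates V E S \<and> card S = domination_number V E"

definition core :: "'a set \<Rightarrow> ('a \<Rightarrow> 'a \<Rightarrow> bool) \<Rightarrow> 'a set" where
  "core V E = {v \<in> V. \<forall>S. is_mds V E S \<longrightarrow> v \<in> S}"

definition corona :: "'a set \<Rightarrow> ('a \<Rightarrow> 'a \<Rightarrow> bool) \<Rightarrow> 'a set" where
  "corona V E = {v \<in> V. \<exists>S. is_mds V E S \<and> v \<in> S}"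

definition del_vertex_V :: "'a set \<Rightarrow> 'a \<Rightarrow> 'a set" where
  "del_vertex_V V v = V - {v}"

definition del_vertex_E :: "('a \<Rightarrow> 'a \<Rightarrow> bool) \<Rightarrow> 'a \<Rightarrow> 'a \<Rightarrow> 'a \<Rightarrow> bool" where
  "del_vertex_E E v = (\<lambda>x y. E x y \<and> x \<noteq> v \<and> y \<noteq> v)"

text \<open>G_v + u: add a new vertex u (represented by None) adjacent only to v;
  old vertices are embedded via Some.\<close>
definition pendant_V :: "'a set \<Rightarrow> 'a option set" where
  "pendant_V V = insert None (Some ` V)"

definition pendant_E :: "('a \<Rightarrow> 'a \<Rightarrow> bool) \<Rightarrow> 'a \<Rightarrow> 'a option \<Rightarrow> 'a option \<Rightarrow> bool" where
  "pendant_E E v = (\<lambda>x y. case (x, y) of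
      (Some a, Some b) \<Rightarrow> E a b
    | (None, Some b) \<Rightarrow> b = v
    | (Some a, None) \<Rightarrow> a = v
    | (None, None) \<Rightarrow> False)"

end

theory Submission
  imports Defs
begin

text \<open>Attaching a pendant vertex u to v costs nothing exactly when some minimum dominating
  set already contains v, since any dominating set of G_v+u can be pushed onto v without
  growing. So the condition on G_v+u says v \<in> corona(G), and a set S as in (2) is a minimum
  dominating set of G avoiding v, which says v \<notin> core(G). If \<gamma>(G-v) < \<gamma>(G), adding
  either v or a neighbour of v to a minimum dominating set of G-v gives minimum dominating
  sets of G with and without v.\<close>

lemma dominates_subset: "dominates V E S \<Longrightarrow> S \<subseteq> V"
  by (simp add: dominates_def)

lemma finite_card_dominating_sets: "finite V \<Longrightarrow> finite {card S | S. dominates V E S}"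
proof -
  assume "finite V"
  moreover have "{card S | S. dominates V E S} \<subseteq> card ` Pow V"
    by (auto dest: dominates_subset)
  ultimately show ?thesis
    using finite_subset by blast
qed

lemma domination_number_le:
  "finite V \<Longrightarrow> dominates V E S \<Longrightarrow> domination_number V E \<le> card S"
  unfolding domination_number_def by (rule Min_le) (auto simp: finite_card_dominating_sets)

lemma ex_mds: "finite V \<Longrightarrow> \<exists>S. is_mds V E S"
proof -
  assume "finite V"
  moreover have "dominates V E V"
    by (auto simp: dominates_def)
  ultimately have "domination_number V E \<in> {card S | S. dominates V E S}"
    unfolding domination_number_def by (intro Min_in finite_card_dominating_sets) auto
  then show ?thesis
    by (auto simp: is_mds_def)
qed

lemma is_mdsI:
  "finite V \<Longrightarrow> dominates V E S \<Longrightarrow> card S \<le> domination_number V E \<Longrightarrow> is_mds V E S"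
  using domination_number_le by (fastforce simp: is_mds_def)

lemma dominates_del_vertex:
  "dominates V E D \<Longrightarrow> v \<notin> D \<Longrightarrow> dominates (del_vertex_V V v) (del_vertex_E E v) D"
  unfolding dominates_def del_vertex_V_def del_vertex_E_def by fastforce

lemma dominates_insert_del_vertex:
  assumes "dominates (del_vertex_V V v) (del_vertex_E E v) D"
    and "u \<in> V" and "u = v \<or> E u v"
  shows "dominates V E (insert u D)"
  using assms unfolding dominates_def del_vertex_V_def del_vertex_E_def by blast

lemma corona_minus_core_if_del_vertex_less:
  assumes G: "graph V E" and "v \<in> V" and "E v u"
    and less: "domination_number (del_vertex_V V v) (del_vertex_E E v) < domination_number V E"
  shows "v \<in> corona V E - core V E"
proof -
  have fin: "finite V" and "E u v" "u \<in> V" "u \<noteq> v"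
    using G \<open>E v u\<close> unfolding graph_def by blast+
  obtain D where D: "is_mds (del_vertex_V V v) (del_vertex_E E v) D"
    using ex_mds fin by (metis del_vertex_V_def finite_Diff)
  then have D_dom: "dominates (del_vertex_V V v) (del_vertex_E E v) D"
    and "v \<notin> D" and "finite D"
    using fin by (auto simp: is_mds_def del_vertex_V_def dest: dominates_subset finite_subset)
  have "card (insert w D) \<le> domination_number V E" for w
    using less D \<open>finite D\<close> by (simp add: is_mds_def card_insert_if)
  then have "is_mds V E (insert v D)" "is_mds V E (insert u D)"
    using dominates_insert_del_vertex[OF D_dom] \<open>v \<in> V\<close> \<open>u \<in> V\<close> \<open>E u v\<close>
    by (auto intro: is_mdsI fin)
  then show ?thesis
    using \<open>v \<in> V\<close> \<open>v \<notin> D\<close> \<open>u \<noteq> v\<close> by (auto simp: corona_def core_def)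
qed

lemma not_in_core_iff_dominates_del_vertex:
  assumes G: "graph V E" and "v \<in> V"
  shows "v \<notin> core V E \<longleftrightarrow>
    (\<exists>S. S \<subseteq> V - {v} \<and> card S = domination_number V E
      \<and> dominates (del_vertex_V V v) (del_vertex_E E v) S \<and> S \<inter> closed_nbhd V E v \<noteq> {})"
  (is "_ \<longleftrightarrow> (\<exists>S. ?witness S)")
proof
  assume "v \<notin> core V E"
  then obtain D where "is_mds V E D" "v \<notin> D"
    using \<open>v \<in> V\<close> by (auto simp: core_def)
  then have "dominates V E D" "card D = domination_number V E" "D \<subseteq> V - {v}"
    "dominates (del_vertex_V V v) (del_vertex_E E v) D"
    by (auto simp: is_mds_def dominates_del_vertex dest: dominates_subset)
  moreover obtain s where "s \<in> D" "E s v"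
    using \<open>dominates V E D\<close> \<open>v \<in> V\<close> \<open>v \<notin> D\<close> by (force simp: dominates_def)
  moreover have "E v s"
    using G \<open>E s v\<close> by (simp add: graph_def)
  ultimately have "?witness D"
    by (auto simp: closed_nbhd_def)
  then show "\<exists>S. ?witness S" ..
next
  assume "\<exists>S. ?witness S"
  then obtain S s where S: "S \<subseteq> V - {v}" "card S = domination_number V E"
    "dominates (del_vertex_V V v) (del_vertex_E E v) S" and "s \<in> S" "E v s"
    by (auto simp: closed_nbhd_def)
  moreover have "E s v" "finite V"
    using G \<open>E v s\<close> by (simp_all add: graph_def)
  ultimately have "dominates V E (insert s S)"
    by (intro dominates_insert_del_vertex) auto
  then have "is_mds V E S"
    using S(2) \<open>s \<in> S\<close> by (intro is_mdsI[OF \<open>finite V\<close>]) (simp_all add: insert_absorb)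
  then show "v \<notin> core V E"
    using S(1) by (auto simp: core_def)
qed

lemma dominates_pendant_image:
  "dominates V E D \<Longrightarrow> v \<in> D \<Longrightarrow> dominates (pendant_V V) (pendant_E E v) (Some ` D)"
  unfolding dominates_def pendant_V_def pendant_E_def by (auto split: option.split)

text \<open>The new vertex None forces None or Some v into D; both are replaced by v itself.\<close>

lemma dominates_of_dominates_pendant:
  assumes "finite V" and "v \<in> V" and D: "dominates (pendant_V V) (pendant_E E v) D"
  shows "\<exists>T. dominates V E T \<and> v \<in> T \<and> card T \<le> card D"
proof -
  define T where "T = insert v (the ` (D - {None, Some v}))"
  have D_sub: "D \<subseteq> pendant_V V"
    using D by (rule dominates_subset)
  then have "finite D"
    using \<open>finite V\<close> by (auto simp: pendant_V_def intro: finite_subset)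
  have "None \<in> pendant_V V"
    by (simp add: pendant_V_def)
  then obtain s where "s \<in> D" "s = None \<or> pendant_E E v s None"
    using D by (auto simp: dominates_def)
  then have "None \<in> D \<or> Some v \<in> D"
    by (cases s) (auto simp: pendant_E_def)
  then have "card (D - {None, Some v}) < card D"
    using \<open>finite D\<close> by (intro psubset_card_mono) auto
  moreover have "card T \<le> Suc (card (D - {None, Some v}))"
    unfolding T_def using \<open>finite D\<close> card_image_le[of "D - {None, Some v}" the]
    by (simp add: card_insert_if)
  ultimately have "card T \<le> card D"
    by simp
  have "\<exists>t\<in>T. t = x \<or> E t x" if "x \<in> V" for x
  proof -
    have "Some x \<in> pendant_V V"
      using that by (simp add: pendant_V_def)
    then obtain d where d: "d \<in> D" "d = Some x \<or> pendant_E E v d (Some x)"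
      using D by (auto simp: dominates_def)
    show ?thesis
    proof (cases "d = None \<or> d = Some v")
      case True
      then show ?thesis
        using d by (auto simp: pendant_E_def T_def)
    next
      case False
      then obtain a where "d = Some a" and "a \<in> T"
        using d(1) unfolding T_def by (cases d) force+
      then show ?thesis
        using d by (auto simp: pendant_E_def)
    qed
  qed
  moreover have "T \<subseteq> V"
    unfolding T_def using D_sub \<open>v \<in> V\<close> by (auto simp: pendant_V_def)
  ultimately have "dominates V E T"
    by (simp add: dominates_def)
  then show ?thesis
    using \<open>card T \<le> card D\<close> T_def by blast
qed

lemma domination_number_pendant_eq_iff:
  assumes "finite V" and "v \<in> V"
  shows "domination_number (pendant_V V) (pendant_E E v) = domination_number V E
    \<longleftrightarrow> v \<in> corona V E"
proof -
  have fin: "finite (pendant_V V)"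
    using \<open>finite V\<close> by (simp add: pendant_V_def)
  obtain D where D: "is_mds (pendant_V V) (pendant_E E v) D"
    using ex_mds fin by blast
  then obtain T where T: "dominates V E T" "v \<in> T"
    "card T \<le> domination_number (pendant_V V) (pendant_E E v)"
    using dominates_of_dominates_pendant[OF assms] by (fastforce simp: is_mds_def)
  then have ge: "domination_number V E \<le> domination_number (pendant_V V) (pendant_E E v)"
    using domination_number_le[OF \<open>finite V\<close>] le_trans by blast
  show ?thesis
  proof
    assume "domination_number (pendant_V V) (pendant_E E v) = domination_number V E"
    then show "v \<in> corona V E"
      using T is_mdsI[OF \<open>finite V\<close>] \<open>v \<in> V\<close> by (fastforce simp: corona_def)
  next
    assume "v \<in> corona V E"
    then obtain S where "is_mds V E S" "v \<in> S"
      by (auto simp: corona_def)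
    then have "dominates (pendant_V V) (pendant_E E v) (Some ` S)"
      by (simp add: is_mds_def dominates_pendant_image)
    then have "domination_number (pendant_V V) (pendant_E E v) \<le> card (Some ` S)"
      by (rule domination_number_le[OF fin])
    then have "domination_number (pendant_V V) (pendant_E E v) \<le> card S"
      by (simp add: card_image)
    then have "domination_number (pendant_V V) (pendant_E E v) \<le> domination_number V E"
      using \<open>is_mds V E S\<close> by (simp add: is_mds_def)
    then show "domination_number (pendant_V V) (pendant_E E v) = domination_number V E"
      using ge by simp
  qed
qed

theorem corollary1:
  fixes V :: "'a set" and E :: "'a \<Rightarrow> 'a \<Rightarrow> bool" and v :: 'a
  assumes "graph V E" and "v \<in> V"
  shows "v \<in> corona V E - core V E \<longleftrightarrow>
    ((domination_number (del_vertex_V V v) (del_vertex_E E v) < domination_number V E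
        \<and> (\<exists>u. E v u))
     \<or> (domination_number (del_vertex_V V v) (del_vertex_E E v) = domination_number V E
        \<and> (\<exists>S. S \<subseteq> V - {v} \<and> card S = domination_number V E
              \<and> dominates (del_vertex_V V v) (del_vertex_E E v) S
              \<and> S \<inter> closed_nbhd V E v \<noteq> {})
        \<and> domination_number (pendant_V V) (pendant_E E v) = domination_number V E))"
    (is "_ \<longleftrightarrow> (?g' < ?g \<and> ?nonisolated) \<or> (?g' = ?g \<and> ?witness \<and> ?gp = ?g)")
proof -
  have "finite V"
    using \<open>graph V E\<close> by (simp add: graph_def)
  have corona: "?gp = ?g \<longleftrightarrow> v \<in> corona V E"
    by (rule domination_number_pendant_eq_iff[OF \<open>finite V\<close> \<open>v \<in> V\<close>])
  have not_core: "v \<notin> core V E \<longleftrightarrow> ?witness"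
    by (rule not_in_core_iff_dominates_del_vertex[OF \<open>graph V E\<close> \<open>v \<in> V\<close>])
  have witness: "?g' \<le> ?g \<and> ?nonisolated" if ?witness
  proof -
    from that obtain S s where "dominates (del_vertex_V V v) (del_vertex_E E v) S"
      "card S = ?g" "s \<in> S \<inter> closed_nbhd V E v" "s \<noteq> v"
      by blast
    moreover have "finite (del_vertex_V V v)"
      using \<open>finite V\<close> by (simp add: del_vertex_V_def)
    ultimately show ?thesis
      using domination_number_le by (fastforce simp: closed_nbhd_def)
  qed
  have "?g' < ?g \<Longrightarrow> ?nonisolated \<Longrightarrow> v \<in> corona V E - core V E"
    using corona_minus_core_if_del_vertex_less[OF \<open>graph V E\<close> \<open>v \<in> V\<close>] by blast
  then show ?thesis
    using corona not_core witness by (auto simp: le_less)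
qed

end
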